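(* Let $p_0$ be a pmf on $\mathbb{N}$ whose support is exactly $\{0,\dots,S\}$ for some integer $S>0$ (so $p_0(k)>0$ for $k\le S$ and $p_0(k)=0$ for $k>S$). Let $g_0=(g_0(0),\dots,g_0(S+1))$ be a centered Gaussian vector in $\mathbb{R}^{S+2}$ with $\mathrm{Cov}(g_0(i),g_0(j))=\mathbb{1}_{\{i=j\}}p_0(i)-p_0(i)p_0(j)$ for $i,j=0,\dots,S+1$. Then $(\Delta g_0(1),\dots,\Delta g_0(S))$, where $\Delta g_0(k)=g_0(k+1)-2g_0(k)+g_0(k-1)$, is a centered Gaussian vector with invertible dispersion matrix. *)

theory Defs
  imports "HOL-Probability.Probability" "Jordan_Normal_Form.Matrix"
begin

definition centered_gaussian_rv :: "'a measure \<Rightarrow> ('a \<Rightarrow> real) \<Rightarrow> bool" where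
  "centered_gaussian_rv M X \<longleftrightarrow> X \<in> borel_measurable M \<and>
     (\<exists>\<sigma>\<ge>0. distr M borel X =
        (if \<sigma> = 0 then return borel 0 else density lborel (normal_density 0 \<sigma>)))"

definition centered_gaussian_vec :: "'a measure \<Rightarrow> nat set \<Rightarrow> ('a \<Rightarrow> nat \<Rightarrow> real) \<Rightarrow> bool" where
  "centered_gaussian_vec M I X \<longleftrightarrow> finite I \<and>
     (\<forall>c. centered_gaussian_rv M (\<lambda>\<omega>. \<Sum>i\<in>I. c i * X \<omega> i))"

definition cov :: "'a measure \<Rightarrow> ('a \<Rightarrow> real) \<Rightarrow> ('a \<Rightarrow> real) \<Rightarrow> real" where
  "cov M X Y = integral\<^sup>L M (\<lambda>\<omega>. (X \<omega> - integral\<^sup>L M X) * (Y \<omega> - integral\<^sup>L M Y))"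

definition Delta2 :: "(nat \<Rightarrow> real) \<Rightarrow> nat \<Rightarrow> real" where
  "Delta2 g k = g (k + 1) - 2 * g k + g (k - 1)"

end

theory Submission
  imports Defs "Jordan_Normal_Form.Determinant"
begin

text \<open>
  Write \<open>p i = pmf p0 i\<close>. For a coefficient vector \<open>u\<close> supported on \<open>{1..S}\<close>, summation by parts
  gives \<open>\<Sum>k u k * \<Delta>\<^sup>2g0 k = \<Sum>i \<Delta>\<^sup>2u i * g0 i\<close>, so the quadratic form of the covariance matrix of
  \<open>\<Delta>\<^sup>2g0\<close> at \<open>u\<close> is the multinomial form at \<open>d = \<Delta>\<^sup>2u\<close>, i.e. the variance
  \<open>\<Sum>i p i * (d i - m)\<^sup>2\<close> of \<open>d\<close> under \<open>p\<close>, with \<open>m = \<Sum>i p i * d i\<close>. If it vanishes, \<open>\<Delta>\<^sup>2u\<close> equals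
  \<open>m\<close> on the support \<open>{0..S}\<close>; with \<open>u 0 = 0\<close> this forces \<open>u k = m k (k + 1) / 2\<close>, and \<open>u (S + 1) = 0\<close>
  gives \<open>m = 0\<close>, hence \<open>u = 0\<close>.
\<close>

definition centered_normal :: "real \<Rightarrow> real measure" where
  "centered_normal \<sigma> = (if \<sigma> = 0 then return borel 0 else density lborel (normal_density 0 \<sigma>))"

lemma centered_gaussian_rv_iff_centered_normal:
  "centered_gaussian_rv M X \<longleftrightarrow>
     X \<in> borel_measurable M \<and> (\<exists>\<sigma>\<ge>0. distr M borel X = centered_normal \<sigma>)"
  unfolding centered_gaussian_rv_def centered_normal_def ..

lemma integrable_centered_normal_power:
  assumes "\<sigma> \<ge> 0"
  shows "integrable (centered_normal \<sigma>) (\<lambda>x. x ^ k)"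
proof (cases "\<sigma> = 0")
  case True
  have "integrable (return borel (0::real)) (\<lambda>x. x ^ k)"
    by (rule integrable_cong_AE_imp[of _ "\<lambda>_. 0 ^ k"])
      (auto simp: AE_return finite_measure.integrable_const[OF prob_space.finite_measure[OF prob_space_return]])
  then show ?thesis
    using True by (simp add: centered_normal_def)
next
  case False
  with assms have "integrable (density lborel (normal_density 0 \<sigma>)) (\<lambda>x::real. x ^ k)"
    using integrable_normal_moment[of \<sigma> 0 k] by (subst integrable_density) auto
  then show ?thesis
    using False by (simp add: centered_normal_def)
qed

lemma integral_centered_normal_id:
  assumes "\<sigma> \<ge> 0"
  shows "integral\<^sup>L (centered_normal \<sigma>) (\<lambda>x. x) = 0"
  using assms
  by (auto simp: centered_normal_def integral_return integral_density integral_normal_moment_nz_1)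

lemma centered_gaussian_rv_integrable_power:
  assumes "centered_gaussian_rv M X"
  shows "integrable M (\<lambda>\<omega>. X \<omega> ^ k)"
proof -
  obtain \<sigma> where X: "X \<in> borel_measurable M" and "\<sigma> \<ge> 0"
    and "distr M borel X = centered_normal \<sigma>"
    using assms unfolding centered_gaussian_rv_iff_centered_normal by blast
  then show ?thesis
    using integrable_centered_normal_power integrable_distr_eq[OF X, of "\<lambda>x. x ^ k"]
    by simp
qed

lemma centered_gaussian_rv_mean_zero:
  assumes "centered_gaussian_rv M X"
  shows "integral\<^sup>L M X = 0"
proof -
  obtain \<sigma> where X: "X \<in> borel_measurable M" and "\<sigma> \<ge> 0"
    and "distr M borel X = centered_normal \<sigma>"
    using assms unfolding centered_gaussian_rv_iff_centered_normal by blast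
  then show ?thesis
    using integral_centered_normal_id integral_distr[OF X, of "\<lambda>x. x"] by simp
qed

lemma abs_mult_le_sum_squares: "\<bar>x * y\<bar> \<le> x\<^sup>2 + (y::real)\<^sup>2"
proof -
  have "2 * (\<bar>x\<bar> * \<bar>y\<bar>) \<le> x\<^sup>2 + y\<^sup>2"
    using sum_squares_bound[of "\<bar>x\<bar>" "\<bar>y\<bar>"] by simp
  moreover have "0 \<le> \<bar>x\<bar> * \<bar>y\<bar>"
    by simp
  ultimately show ?thesis
    unfolding abs_mult by linarith
qed

lemma cov_sum_sum:
  fixes X :: "nat \<Rightarrow> 'a \<Rightarrow> real"
  assumes "finite I"
    and "\<And>i. i \<in> I \<Longrightarrow> integrable M (X i)"
    and "\<And>i. i \<in> I \<Longrightarrow> integrable M (\<lambda>\<omega>. X i \<omega> ^ 2)"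
    and "\<And>i. i \<in> I \<Longrightarrow> integral\<^sup>L M (X i) = 0"
  shows "cov M (\<lambda>\<omega>. \<Sum>i\<in>I. a i * X i \<omega>) (\<lambda>\<omega>. \<Sum>j\<in>I. b j * X j \<omega>)
       = (\<Sum>i\<in>I. \<Sum>j\<in>I. a i * b j * cov M (X i) (X j))"
proof -
  have prod: "integrable M (\<lambda>\<omega>. X i \<omega> * X j \<omega>)" if "i \<in> I" "j \<in> I" for i j
  proof (rule Bochner_Integration.integrable_bound)
    show "integrable M (\<lambda>\<omega>. X i \<omega> ^ 2 + X j \<omega> ^ 2)"
      using assms(3) that by (intro Bochner_Integration.integrable_add) auto
    show "(\<lambda>\<omega>. X i \<omega> * X j \<omega>) \<in> borel_measurable M"
      using assms(2) that by (intro borel_measurable_times borel_measurable_integrable) auto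
    show "AE \<omega> in M. norm (X i \<omega> * X j \<omega>) \<le> norm (X i \<omega> ^ 2 + X j \<omega> ^ 2)"
      using abs_mult_le_sum_squares by auto
  qed
  have mean: "integral\<^sup>L M (\<lambda>\<omega>. \<Sum>i\<in>I. c i * X i \<omega>) = 0" for c
    using assms(2,4) by simp
  have "cov M (\<lambda>\<omega>. \<Sum>i\<in>I. a i * X i \<omega>) (\<lambda>\<omega>. \<Sum>j\<in>I. b j * X j \<omega>)
      = integral\<^sup>L M (\<lambda>\<omega>. (\<Sum>i\<in>I. a i * X i \<omega>) * (\<Sum>j\<in>I. b j * X j \<omega>))"
    unfolding cov_def mean by simp
  also have "\<dots> = integral\<^sup>L M (\<lambda>\<omega>. \<Sum>i\<in>I. \<Sum>j\<in>I. a i * b j * (X i \<omega> * X j \<omega>))"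
    by (simp only: sum_product mult_ac)
  also have "\<dots> = (\<Sum>i\<in>I. \<Sum>j\<in>I. a i * b j * integral\<^sup>L M (\<lambda>\<omega>. X i \<omega> * X j \<omega>))"
    using prod by simp
  also have "\<dots> = (\<Sum>i\<in>I. \<Sum>j\<in>I. a i * b j * cov M (X i) (X j))"
    using assms(4) by (simp add: cov_def)
  finally show ?thesis .
qed

lemma centered_gaussian_vec_component:
  assumes "centered_gaussian_vec M I X" "i \<in> I"
  shows "centered_gaussian_rv M (\<lambda>\<omega>. X \<omega> i)"
proof -
  have "(\<Sum>j\<in>I. (if j = i then 1 else 0) * X \<omega> j) = (\<Sum>j\<in>I. if j = i then X \<omega> j else 0)" for \<omega>
    by (rule sum.cong) auto
  then have "(\<lambda>\<omega>. \<Sum>j\<in>I. (if j = i then 1 else 0) * X \<omega> j) = (\<lambda>\<omega>. X \<omega> i)"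
    using assms by (simp add: centered_gaussian_vec_def sum.delta')
  then show ?thesis
    using assms unfolding centered_gaussian_vec_def by metis
qed

lemma cov_sum_sum_centered_gaussian:
  assumes "centered_gaussian_vec M I X"
  shows "cov M (\<lambda>\<omega>. \<Sum>i\<in>I. a i * X \<omega> i) (\<lambda>\<omega>. \<Sum>j\<in>I. b j * X \<omega> j)
       = (\<Sum>i\<in>I. \<Sum>j\<in>I. a i * b j * cov M (\<lambda>\<omega>. X \<omega> i) (\<lambda>\<omega>. X \<omega> j))"
proof (rule cov_sum_sum[where X = "\<lambda>i \<omega>. X \<omega> i"])
  show "finite I"
    using assms by (simp add: centered_gaussian_vec_def)
  fix i assume "i \<in> I"
  then have X: "centered_gaussian_rv M (\<lambda>\<omega>. X \<omega> i)"
    by (rule centered_gaussian_vec_component[OF assms])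
  show "integrable M (\<lambda>\<omega>. X \<omega> i)"
    using centered_gaussian_rv_integrable_power[OF X, of 1] by simp
  show "integrable M (\<lambda>\<omega>. X \<omega> i ^ 2)"
    using centered_gaussian_rv_integrable_power[OF X, of 2] .
  show "integral\<^sup>L M (\<lambda>\<omega>. X \<omega> i) = 0"
    using X by (rule centered_gaussian_rv_mean_zero)
qed

text \<open>At \<open>j = 0\<close> truncated subtraction gives \<open>Delta2 g 0 = g 1 - g 0\<close>,
  i.e. \<open>g (-1)\<close> is read as \<open>g 0\<close>; the identity holds with this convention.\<close>

lemma sum_Delta2_Green:
  fixes u g :: "nat \<Rightarrow> real"
  shows "(\<Sum>j\<le>n. u j * Delta2 g j) - (\<Sum>j\<le>n. Delta2 u j * g j) = u n * g (n + 1) - u (n + 1) * g n"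
  by (induction n) (simp_all add: Delta2_def algebra_simps)

lemma sum_mult_Delta2_eq:
  fixes u g :: "nat \<Rightarrow> real"
  assumes "\<And>j. j \<notin> {1..n} \<Longrightarrow> u j = 0"
  shows "(\<Sum>k\<in>{1..n}. u k * Delta2 g k) = (\<Sum>i\<in>{0..n+1}. Delta2 u i * g i)"
proof -
  have "(\<Sum>k\<in>{1..n}. u k * Delta2 g k) = (\<Sum>k\<le>n+1. u k * Delta2 g k)"
    by (rule sum.mono_neutral_left) (auto simp: assms)
  also have "\<dots> = (\<Sum>i\<le>n+1. Delta2 u i * g i)"
    using sum_Delta2_Green[of u g "n + 1"] assms[of "n + 1"] assms[of "n + 2"] by simp
  finally show ?thesis by (simp add: atMost_atLeast0)
qed

lemma centered_gaussian_vec_Delta2: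
  assumes "centered_gaussian_vec M {0..n+1} g"
  shows "centered_gaussian_vec M {1..n} (\<lambda>\<omega>. Delta2 (g \<omega>))"
  unfolding centered_gaussian_vec_def
proof (intro conjI allI)
  fix c :: "nat \<Rightarrow> real"
  define u where "u k = (if k \<in> {1..n} then c k else 0)" for k
  have "(\<Sum>k\<in>{1..n}. c k * Delta2 (g \<omega>) k) = (\<Sum>i\<in>{0..n+1}. Delta2 u i * g \<omega> i)" for \<omega>
  proof -
    have "(\<Sum>k\<in>{1..n}. c k * Delta2 (g \<omega>) k) = (\<Sum>k\<in>{1..n}. u k * Delta2 (g \<omega>) k)"
      by (simp add: u_def)
    also have "\<dots> = (\<Sum>i\<in>{0..n+1}. Delta2 u i * g \<omega> i)"
      by (rule sum_mult_Delta2_eq) (auto simp: u_def)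
    finally show ?thesis .
  qed
  then show "centered_gaussian_rv M (\<lambda>\<omega>. \<Sum>k\<in>{1..n}. c k * Delta2 (g \<omega>) k)"
    using assms unfolding centered_gaussian_vec_def by simp
qed simp

lemma cov_Delta2_quadratic_form:
  assumes "centered_gaussian_vec M {0..n+1} g" "\<And>j. j \<notin> {1..n} \<Longrightarrow> u j = 0"
  shows "(\<Sum>k\<in>{1..n}. \<Sum>l\<in>{1..n}. u k * u l * cov M (\<lambda>\<omega>. Delta2 (g \<omega>) k) (\<lambda>\<omega>. Delta2 (g \<omega>) l))
       = (\<Sum>i\<in>{0..n+1}. \<Sum>j\<in>{0..n+1}. Delta2 u i * Delta2 u j * cov M (\<lambda>\<omega>. g \<omega> i) (\<lambda>\<omega>. g \<omega> j))"
proof -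
  have "(\<Sum>k\<in>{1..n}. \<Sum>l\<in>{1..n}. u k * u l * cov M (\<lambda>\<omega>. Delta2 (g \<omega>) k) (\<lambda>\<omega>. Delta2 (g \<omega>) l))
      = cov M (\<lambda>\<omega>. \<Sum>k\<in>{1..n}. u k * Delta2 (g \<omega>) k) (\<lambda>\<omega>. \<Sum>l\<in>{1..n}. u l * Delta2 (g \<omega>) l)"
    using cov_sum_sum_centered_gaussian[OF centered_gaussian_vec_Delta2[OF assms(1)]] by simp
  also have "\<dots> = cov M (\<lambda>\<omega>. \<Sum>i\<in>{0..n+1}. Delta2 u i * g \<omega> i) (\<lambda>\<omega>. \<Sum>j\<in>{0..n+1}. Delta2 u j * g \<omega> j)"
    using sum_mult_Delta2_eq[OF assms(2)] by simp
  also have "\<dots> = (\<Sum>i\<in>{0..n+1}. \<Sum>j\<in>{0..n+1}. Delta2 u i * Delta2 u j * cov M (\<lambda>\<omega>. g \<omega> i) (\<lambda>\<omega>. g \<omega> j))"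
    using assms(1) by (rule cov_sum_sum_centered_gaussian)
  finally show ?thesis .
qed

lemma multinomial_cov_quadratic_form:
  fixes p d :: "'i \<Rightarrow> real"
  assumes "finite I" "sum p I = 1"
  shows "(\<Sum>i\<in>I. \<Sum>j\<in>I. d i * d j * ((if i = j then p i else 0) - p i * p j))
       = (\<Sum>i\<in>I. p i * (d i - (\<Sum>j\<in>I. p j * d j))\<^sup>2)"
proof -
  define m where "m = (\<Sum>j\<in>I. p j * d j)"
  have "d i * d j * ((if i = j then p i else 0) - p i * p j)
      = (if i = j then p i * (d i)\<^sup>2 else 0) - (p i * d i) * (p j * d j)" for i j
    by (simp add: power2_eq_square algebra_simps)
  then have "(\<Sum>i\<in>I. \<Sum>j\<in>I. d i * d j * ((if i = j then p i else 0) - p i * p j))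
      = (\<Sum>i\<in>I. p i * (d i)\<^sup>2) - m * m"
    using assms(1) by (simp add: sum_subtractf m_def sum_product)
  also have "\<dots> = (\<Sum>i\<in>I. p i * (d i)\<^sup>2) - 2 * m * m + m\<^sup>2 * sum p I"
    using assms(2) by (simp add: power2_eq_square)
  also have "\<dots> = (\<Sum>i\<in>I. p i * (d i - m)\<^sup>2)"
  proof -
    have "p i * (d i - m)\<^sup>2 = p i * (d i)\<^sup>2 - 2 * m * (p i * d i) + m\<^sup>2 * p i" for i
      by (simp add: power2_diff algebra_simps)
    then show ?thesis
      by (simp add: sum.distrib sum_subtractf sum_distrib_left[symmetric] m_def[symmetric])
  qed
  finally show ?thesis
    by (simp add: m_def)
qed

lemma Delta2_eq_const_closed_form:
  fixes u :: "nat \<Rightarrow> real"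
  assumes "u 0 = 0" "\<And>i. i \<le> n \<Longrightarrow> Delta2 u i = m" "k \<le> n + 1"
  shows "u k = m * real k * (real k + 1) / 2"
proof -
  have step: "u k = m * real k * (real k + 1) / 2 \<and> u (k + 1) = m * (real k + 1) * (real k + 2) / 2"
    if "k \<le> n" for k
    using that
  proof (induction k)
    case 0
    then show ?case
      using assms(1) assms(2)[of 0] by (simp add: Delta2_def)
  next
    case (Suc k)
    then have "u (k + 2) = m + 2 * u (k + 1) - u k"
      using assms(2)[of "k + 1"] by (simp add: Delta2_def)
    with Suc show ?case
      by (simp add: field_simps)
  qed
  consider "k \<le> n" | "k = n + 1"
    using assms(3) by linarith
  then show ?thesis
  proof cases
    case 1
    then show ?thesis
      using step by blast
  next
    case 2
    then show ?thesis
      using step[of n] by (simp add: algebra_simps)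
  qed
qed

lemma Delta2_eq_const_boundary_zero:
  fixes u :: "nat \<Rightarrow> real"
  assumes "u 0 = 0" "u (n + 1) = 0" "\<And>i. i \<le> n \<Longrightarrow> Delta2 u i = m" "k \<le> n + 1"
  shows "u k = 0"
proof -
  have "m * (real n + 1) * (real n + 2) / 2 = 0"
    using Delta2_eq_const_closed_form[OF assms(1,3), where k = "n + 1"] assms(2) by simp
  then have "m = 0"
    by simp
  then show ?thesis
    using Delta2_eq_const_closed_form[OF assms(1,3,4)] by simp
qed

lemma Delta2_multinomial_form_nondegenerate:
  fixes p u :: "nat \<Rightarrow> real"
  assumes p_pos: "\<And>i. i \<le> n \<Longrightarrow> p i > 0" and "p (n + 1) \<ge> 0" and "(\<Sum>i\<in>{0..n+1}. p i) = 1"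
    and "u 0 = 0" "u (n + 1) = 0"
    and "(\<Sum>i\<in>{0..n+1}. \<Sum>j\<in>{0..n+1}. Delta2 u i * Delta2 u j * ((if i = j then p i else 0) - p i * p j)) = 0"
    and "k \<le> n + 1"
  shows "u k = 0"
proof -
  define m where "m = (\<Sum>j\<in>{0..n+1}. p j * Delta2 u j)"
  have "(\<Sum>i\<in>{0..n+1}. p i * (Delta2 u i - m)\<^sup>2) = 0"
    using assms(6) multinomial_cov_quadratic_form[OF _ assms(3), of "Delta2 u"] by (simp add: m_def)
  moreover have "0 \<le> p i" if "i \<in> {0..n+1}" for i
    using that p_pos[of i] assms(2) by (cases "i \<le> n") (auto simp: le_Suc_eq)
  ultimately have zero: "p i * (Delta2 u i - m)\<^sup>2 = 0" if "i \<in> {0..n+1}" for i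
    using that by (subst (asm) sum_nonneg_eq_0_iff) auto
  have "Delta2 u i = m" if "i \<le> n" for i
    using zero[of i] that p_pos[OF that] by simp
  then show ?thesis
    using Delta2_eq_const_boundary_zero assms(4,5,7) by blast
qed

lemma invertible_mat_of_kernel_trivial:
  fixes A :: "'a :: field mat"
  assumes A: "A \<in> carrier_mat n n"
    and "\<And>v. v \<in> carrier_vec n \<Longrightarrow> A *\<^sub>v v = 0\<^sub>v n \<Longrightarrow> v = 0\<^sub>v n"
  shows "invertible_mat A"
proof -
  have "det A \<noteq> 0"
    using det_0_iff_vec_prod_zero_field[OF A] assms(2) by blast
  then obtain B where "B \<in> carrier_mat n n" "B * A = 1\<^sub>m n" "A * B = 1\<^sub>m n"
    using det_non_zero_imp_unit[OF A] unfolding Units_def ring_mat_def by auto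
  then show ?thesis
    using A unfolding invertible_mat_def inverts_mat_def by auto
qed

lemma quadratic_form_mat_shift:
  fixes f :: "nat \<Rightarrow> nat \<Rightarrow> 'a :: comm_semiring_0"
  assumes "v \<in> carrier_vec n" "\<And>k. k < n \<Longrightarrow> u (Suc k) = v $ k"
  shows "v \<bullet> (mat n n (\<lambda>(i, j). f (i + 1) (j + 1)) *\<^sub>v v) = (\<Sum>k\<in>{1..n}. \<Sum>l\<in>{1..n}. u k * u l * f k l)"
  using assms
  by (simp add: scalar_prod_def sum.atLeast1_atMost_eq lessThan_atLeast0 sum_distrib_left mult_ac)

lemma invertible_cov_mat_Delta2:
  assumes "centered_gaussian_vec M {0..n+1} g"
    and "\<And>i j. i \<le> n + 1 \<Longrightarrow> j \<le> n + 1 \<Longrightarrow>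
           cov M (\<lambda>\<omega>. g \<omega> i) (\<lambda>\<omega>. g \<omega> j) = (if i = j then p i else 0) - p i * p j"
    and "\<And>i. i \<le> n \<Longrightarrow> p i > 0" "p (n + 1) \<ge> 0" "(\<Sum>i\<in>{0..n+1}. p i) = 1"
  shows "invertible_mat (mat n n (\<lambda>(i, j).
             cov M (\<lambda>\<omega>. Delta2 (g \<omega>) (i + 1)) (\<lambda>\<omega>. Delta2 (g \<omega>) (j + 1))))"
    (is "invertible_mat ?A")
proof (rule invertible_mat_of_kernel_trivial)
  show "?A \<in> carrier_mat n n"
    by simp
  fix v :: "real vec"
  assume v: "v \<in> carrier_vec n" and "?A *\<^sub>v v = 0\<^sub>v n"
  then have "v \<bullet> (?A *\<^sub>v v) = 0"
    by simp
  define u where "u k = (if k \<in> {1..n} then v $ (k - 1) else 0)" for k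
  have "v \<bullet> (?A *\<^sub>v v) = (\<Sum>k\<in>{1..n}. \<Sum>l\<in>{1..n}.
      u k * u l * cov M (\<lambda>\<omega>. Delta2 (g \<omega>) k) (\<lambda>\<omega>. Delta2 (g \<omega>) l))"
    by (rule quadratic_form_mat_shift[OF v]) (simp add: u_def)
  also have "\<dots> = (\<Sum>i\<in>{0..n+1}. \<Sum>j\<in>{0..n+1}.
      Delta2 u i * Delta2 u j * cov M (\<lambda>\<omega>. g \<omega> i) (\<lambda>\<omega>. g \<omega> j))"
    by (rule cov_Delta2_quadratic_form[OF assms(1)]) (auto simp: u_def)
  also have "\<dots> = (\<Sum>i\<in>{0..n+1}. \<Sum>j\<in>{0..n+1}.
      Delta2 u i * Delta2 u j * ((if i = j then p i else 0) - p i * p j))"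
    using assms(2) by (intro sum.cong) auto
  finally have form: "\<dots> = 0"
    using \<open>v \<bullet> (?A *\<^sub>v v) = 0\<close> by simp
  have u_zero: "u k = 0" if "k \<le> n + 1" for k
    using Delta2_multinomial_form_nondegenerate[OF assms(3-5) _ _ form that] by (simp add: u_def)
  show "v = 0\<^sub>v n"
  proof (rule eq_vecI)
    fix i
    assume "i < dim_vec (0\<^sub>v n)"
    then show "v $ i = 0\<^sub>v n $ i"
      using u_zero[of "i + 1"] by (simp add: u_def)
  qed (use v in simp)
qed

theorem lemma2:
  fixes M :: "'a measure" and p0 :: "nat pmf" and S :: nat and g0 :: "'a \<Rightarrow> nat \<Rightarrow> real"
  assumes "prob_space M"
    and "S > 0"
    and "set_pmf p0 = {0..S}"
    and "centered_gaussian_vec M {0..S+1} g0"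
    and "\<And>i j. i \<le> S + 1 \<Longrightarrow> j \<le> S + 1 \<Longrightarrow>
           cov M (\<lambda>\<omega>. g0 \<omega> i) (\<lambda>\<omega>. g0 \<omega> j) = (if i = j then pmf p0 i else 0) - pmf p0 i * pmf p0 j"
  shows "centered_gaussian_vec M {1..S} (\<lambda>\<omega>. Delta2 (g0 \<omega>))
       \<and> invertible_mat (mat S S (\<lambda>(i, j).
             cov M (\<lambda>\<omega>. Delta2 (g0 \<omega>) (i + 1)) (\<lambda>\<omega>. Delta2 (g0 \<omega>) (j + 1))))"
proof -
  have "(\<Sum>i\<in>{0..S+1}. pmf p0 i) = 1"
    using assms(3) by (intro sum_pmf_eq_1) auto
  moreover have "pmf p0 i > 0" if "i \<le> S" for i
    using assms(3) that by (simp add: pmf_positive_iff)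
  ultimately have "invertible_mat (mat S S (\<lambda>(i, j).
      cov M (\<lambda>\<omega>. Delta2 (g0 \<omega>) (i + 1)) (\<lambda>\<omega>. Delta2 (g0 \<omega>) (j + 1))))"
    using assms(5) by (intro invertible_cov_mat_Delta2[OF assms(4)]) auto
  then show ?thesis
    using centered_gaussian_vec_Delta2[OF assms(4)] by blast
qed

end
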